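(* For every real $t>0$, $\varphi(1/t)=t^3\varphi(t)$. Moreover $\varphi(t)\to1$ as $t\to0^+$; more precisely, for $0<t\le 1/2$, $\varphi(t)=\frac{1}{135135\,t^{21}}\sum_{\varepsilon_1,\dots,\varepsilon_6\in\{\pm1\}}\varepsilon_1\cdots\varepsilon_6(1+\varepsilon_1t+\dots+\varepsilon_6t^6)^{13/2}$ and $\varphi(t)=1-\tfrac{1}{24}t^2+O(t^4)$.
   Context: For $t>0$ define \[\varphi(t)=\frac{1}{135135\;t^{21}}\sum_{\varepsilon_0,\dots,\varepsilon_6\in\{\pm1\}}\varepsilon_0\varepsilon_1\cdots\varepsilon_6\max\{\varepsilon_0+\varepsilon_1t+\dots+\varepsilon_6t^6,0\}^{13/2},\] where $135135=3\cdot5\cdot7\cdot9\cdot11\cdot13$. *)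

theory Defs
  imports "HOL-Analysis.Analysis" "HOL-Library.Landau_Symbols"
begin

text \<open>Sign vectors (eps 0, ..., eps 6) are functions nat => real with values in {-1,1}
  on {0..6} (and undefined elsewhere), i.e. elements of PiE {0..6} (%_. {-1,1}).\<close>

definition phi :: "real \<Rightarrow> real" where
  "phi t = (1 / (135135 * t ^ 21)) *
     (\<Sum>e\<in>PiE {0..6::nat} (\<lambda>_. {-1, 1::real}).
        (\<Prod>i\<in>{0..6}. e i) * (max (\<Sum>i\<in>{0..6}. e i * t ^ i) 0) powr (13/2))"

end

theory Submission
  imports Defs
begin

(*
  phi t is, up to the factor 1/(135135 t^21), the iterated symmetric difference
  Delta_{t^0} Delta_{t^1} ... Delta_{t^6} of g(y) = max y 0 ^ (13/2) at 0, where
  Delta_h f (y) = f (y + h) - f (y - h).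

  The proof has three independent parts.
  (1) Inversion: replacing t by 1/t and reversing the sign vector
      (eps_0, ..., eps_6) |-> (eps_6, ..., eps_0) gives phi (1/t) = t^3 phi t.
  (2) Small t: when t + ... + t^6 < 1, the terms with eps_0 = -1 vanish, so phi t is
      the sixfold difference L of (1 + y)^(13/2) with steps t, ..., t^6 at y = 0.
  (3) Asymptotics: L equals the product of the 2 t^i times the mean of the sixth
      derivative (135135/64) (1 + y)^(1/2) over the box s_i in [-t^i, t^i] at
      y = s_1 + ... + s_6 (a multiple mean value theorem).  We prove the bounded
      form of this once and for all: if the n-th derivative is within M of a cubic,
      the n-fold difference is within (prod 2 h_i) M of (prod 2 h_i) times the
      box mean of the cubic, which is computed exactly.  With the cubic Taylor
      polynomial of sqrt (1 + y) this gives phi t = 1 - (t^2 + ... + t^12)/24 + O(t^4).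
*)

definition sym_diff :: "(nat \<Rightarrow> real) \<Rightarrow> nat \<Rightarrow> (real \<Rightarrow> real) \<Rightarrow> real \<Rightarrow> real" where
  "sym_diff h n g x =
     (\<Sum>e\<in>PiE {1..n} (\<lambda>_. {-1, 1::real}). (\<Prod>i\<in>{1..n}. e i) * g (x + (\<Sum>i\<in>{1..n}. e i * h i)))"

lemma sum_signs_insert:
  fixes g :: "real \<Rightarrow> real" and h :: "'a \<Rightarrow> real"
  assumes "finite I" and "k \<notin> I"
  shows "(\<Sum>e\<in>PiE (insert k I) (\<lambda>_. {-1, 1::real}).
            (\<Prod>i\<in>insert k I. e i) * g (\<Sum>i\<in>insert k I. e i * h i))
       = (\<Sum>e\<in>PiE I (\<lambda>_. {-1, 1::real}). (\<Prod>i\<in>I. e i) *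
            (g (h k + (\<Sum>i\<in>I. e i * h i)) - g (- h k + (\<Sum>i\<in>I. e i * h i))))"
proof -
  let ?F = "\<lambda>e. (\<Prod>i\<in>insert k I. e i) * g (\<Sum>i\<in>insert k I. e i * h i)"
  have upd_prod: "(\<Prod>i\<in>insert k I. (f(k := y)) i) = y * (\<Prod>i\<in>I. f i)" for f and y :: real
  proof -
    have "(\<Prod>i\<in>I. (f(k := y)) i) = (\<Prod>i\<in>I. f i)"
      using assms(2) by (intro prod.cong) auto
    then show ?thesis using assms by simp
  qed
  have upd_sum: "(\<Sum>i\<in>insert k I. (f(k := y)) i * h i) = y * h k + (\<Sum>i\<in>I. f i * h i)"
    for f and y :: real
  proof -
    have "(\<Sum>i\<in>I. (f(k := y)) i * h i) = (\<Sum>i\<in>I. f i * h i)"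
      using assms(2) by (intro sum.cong) auto
    then show ?thesis using assms by simp
  qed
  have "(\<Sum>e\<in>PiE (insert k I) (\<lambda>_. {-1, 1::real}). ?F e)
      = (\<Sum>(y, f)\<in>{-1, 1} \<times> PiE I (\<lambda>_. {-1, 1::real}). ?F (f(k := y)))"
    unfolding PiE_insert_eq
    by (subst sum.reindex[OF inj_combinator[OF assms(2)]]) (simp only: o_def case_prod_unfold)
  also have "\<dots> = (\<Sum>y\<in>{-1, 1}. \<Sum>f\<in>PiE I (\<lambda>_. {-1, 1::real}). ?F (f(k := y)))"
    by (rule sum.cartesian_product[symmetric])
  also have "\<dots> = (\<Sum>e\<in>PiE I (\<lambda>_. {-1, 1::real}). (\<Prod>i\<in>I. e i) *
            (g (h k + (\<Sum>i\<in>I. e i * h i)) - g (- h k + (\<Sum>i\<in>I. e i * h i))))"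
    by (simp only: upd_prod upd_sum) (simp add: sum_subtractf[symmetric] sum_negf right_diff_distrib)
  finally show ?thesis .
qed

lemma sym_diff_Suc:
  "sym_diff h (Suc n) g x = sym_diff h n (\<lambda>y. g (y + h (Suc n)) - g (y - h (Suc n))) x"
proof -
  have "{1..Suc n} = insert (Suc n) {1..n}" by auto
  then show ?thesis
    unfolding sym_diff_def
    using sum_signs_insert[of "{1..n}" "Suc n" "\<lambda>s. g (x + s)" h]
    by (simp add: algebra_simps)
qed

lemma symmetric_difference_has_derivative:
  fixes f f' :: "real \<Rightarrow> real"
  assumes "(f has_real_derivative f' (y + H)) (at (y + H))"
    and "(f has_real_derivative f' (y - H)) (at (y - H))"
  shows "((\<lambda>y. f (y + H) - f (y - H)) has_real_derivative f' (y + H) - f' (y - H)) (at y)"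
proof -
  have "((\<lambda>y. f (y + H) - f (y + - H)) has_real_derivative f' (y + H) - f' (y + - H)) (at y)"
    using assms by (intro DERIV_diff) (simp_all only: DERIV_shift diff_conv_add_uminus)
  then show ?thesis
    by simp
qed

(* One difference step: if F' is within M of a cubic p on [u - H, u + H], then
   F (u + H) - F (u - H) is within 2 H M of the integral of p over that interval,
   which is again a cubic in u. *)
lemma difference_step_cubic_approx:
  fixes F f :: "real \<Rightarrow> real"
  assumes "0 \<le> H"
    and deriv: "\<And>s. s \<in> {u - H..u + H} \<Longrightarrow> (F has_real_derivative f s) (at s)"
    and approx: "\<And>s. s \<in> {u - H..u + H} \<Longrightarrow> \<bar>f s - (A + B * s + C * s ^ 2 + D * s ^ 3)\<bar> \<le> M"
  shows "\<bar>F (u + H) - F (u - H) - (2 * H * (A + C * H ^ 2 / 3) + 2 * H * (B + D * H ^ 2) * u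
            + 2 * H * C * u ^ 2 + 2 * H * D * u ^ 3)\<bar> \<le> 2 * H * M"
proof -
  define P where "P = (\<lambda>s::real. A * s + B * s ^ 2 / 2 + C * s ^ 3 / 3 + D * s ^ 4 / 4)"
  have P_deriv: "(P has_real_derivative A + B * s + C * s ^ 2 + D * s ^ 3) (at s)" for s
    unfolding P_def by (auto intro!: derivative_eq_intros simp: eval_nat_numeral field_simps)
  have "\<bar>(F (u + H) - P (u + H)) - (F (u - H) - P (u - H))\<bar> \<le> M * \<bar>(u + H) - (u - H)\<bar>"
  proof (rule field_differentiable_bound[where S = "{u - H..u + H}" and f = "\<lambda>s. F s - P s"
        and x = "u + H" and y = "u - H", unfolded real_norm_def])
    fix s :: real assume s: "s \<in> {u - H..u + H}"
    show "((\<lambda>s. F s - P s) has_real_derivative f s - (A + B * s + C * s ^ 2 + D * s ^ 3))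
            (at s within {u - H..u + H})"
      by (rule has_field_derivative_at_within, rule DERIV_diff[OF deriv[OF s] P_deriv])
    show "\<bar>f s - (A + B * s + C * s ^ 2 + D * s ^ 3)\<bar> \<le> M"
      by (rule approx[OF s])
  qed (use \<open>0 \<le> H\<close> in auto)
  moreover have "P (u + H) - P (u - H) = 2 * H * (A + C * H ^ 2 / 3) + 2 * H * (B + D * H ^ 2) * u
                   + 2 * H * C * u ^ 2 + 2 * H * D * u ^ 3"
    unfolding P_def by (simp add: field_simps) algebra
  ultimately show ?thesis
    using \<open>0 \<le> H\<close> by (simp add: algebra_simps)
qed

(* Multiple mean value estimate: if the n-th derivative G n of G 0 is within M of a
   cubic, the n-fold difference is within (prod 2 h i) M of (prod 2 h i) times the mean
   of the cubic over the box x + [-h 1, h 1] + ... + [-h n, h n]; that mean uses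
   E S = 0, E S^2 = (sum h i^2)/3 and E S^3 = 0 for S uniform on the box. *)
lemma sym_diff_cubic_approx:
  fixes G :: "nat \<Rightarrow> real \<Rightarrow> real" and h :: "nat \<Rightarrow> real"
  assumes "\<And>i. i \<in> {1..n} \<Longrightarrow> 0 \<le> h i"
    and "\<And>k y. k < n \<Longrightarrow> y \<in> {a..b} \<Longrightarrow> (G k has_real_derivative G (Suc k) y) (at y)"
    and "\<And>y. y \<in> {a..b} \<Longrightarrow> \<bar>G n y - (A + B * y + C * y ^ 2 + D * y ^ 3)\<bar> \<le> M"
    and "a \<le> x - (\<Sum>i\<in>{1..n}. h i)" and "x + (\<Sum>i\<in>{1..n}. h i) \<le> b"
  shows "\<bar>sym_diff h n (G 0) x - (\<Prod>i\<in>{1..n}. 2 * h i) *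
            (A + B * x + C * (x ^ 2 + (\<Sum>i\<in>{1..n}. h i ^ 2) / 3)
               + D * (x ^ 3 + x * (\<Sum>i\<in>{1..n}. h i ^ 2)))\<bar>
         \<le> (\<Prod>i\<in>{1..n}. 2 * h i) * M"
  using assms
proof (induction n arbitrary: G a b A B C D M x)
  case 0
  then have "x \<in> {a..b}" by simp
  with "0.prems"(3) show ?case by (simp add: sym_diff_def)
next
  case (Suc n)
  define H where "H = h (Suc n)"
  define V where "V = (\<Sum>i\<in>{1..n}. h i ^ 2)"
  define G' where "G' = (\<lambda>k y. G k (y + H) - G k (y - H))"
  have H_nonneg: "0 \<le> H"
    using Suc.prems(1) by (simp add: H_def)
  have sum_Suc: "(\<Sum>i\<in>{1..Suc n}. f i) = (\<Sum>i\<in>{1..n}. f i) + f (Suc n)"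
    and prod_Suc: "(\<Prod>i\<in>{1..Suc n}. f i) = (\<Prod>i\<in>{1..n}. f i) * f (Suc n)"
    for f :: "nat \<Rightarrow> real" by simp_all
  have "0 \<le> (\<Sum>i\<in>{1..n}. h i)"
    using Suc.prems(1) by (intro sum_nonneg) auto
  then have lower: "a + H \<le> x - (\<Sum>i\<in>{1..n}. h i)" and upper: "x + (\<Sum>i\<in>{1..n}. h i) \<le> b - H"
    using Suc.prems(4,5) unfolding sum_Suc H_def by simp_all
  have G'_approx: "\<bar>G' n y - (2 * H * (A + C * H ^ 2 / 3) + 2 * H * (B + D * H ^ 2) * y
                       + 2 * H * C * y ^ 2 + 2 * H * D * y ^ 3)\<bar> \<le> 2 * H * M"
    if "y \<in> {a + H..b - H}" for y
    unfolding G'_def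
  proof (rule difference_step_cubic_approx[OF H_nonneg])
    show "(G n has_real_derivative G (Suc n) s) (at s)" if "s \<in> {y - H..y + H}" for s
      using Suc.prems(2) that \<open>y \<in> {a + H..b - H}\<close> by simp
    show "\<bar>G (Suc n) s - (A + B * s + C * s ^ 2 + D * s ^ 3)\<bar> \<le> M" if "s \<in> {y - H..y + H}" for s
      using Suc.prems(3) that \<open>y \<in> {a + H..b - H}\<close> by simp
  qed
  have IH: "\<bar>sym_diff h n (G' 0) x - (\<Prod>i\<in>{1..n}. 2 * h i) *
      (2 * H * (A + C * H ^ 2 / 3) + 2 * H * (B + D * H ^ 2) * x + 2 * H * C * (x ^ 2 + V / 3)
        + 2 * H * D * (x ^ 3 + x * V))\<bar> \<le> (\<Prod>i\<in>{1..n}. 2 * h i) * (2 * H * M)"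
    unfolding V_def
  proof (rule Suc.IH)
    show "\<And>i. i \<in> {1..n} \<Longrightarrow> 0 \<le> h i"
      using Suc.prems(1) by simp
    show "(G' k has_real_derivative G' (Suc k) y) (at y)" if "k < n" "y \<in> {a + H..b - H}" for k y
      unfolding G'_def
      by (rule symmetric_difference_has_derivative) (use Suc.prems(2) that H_nonneg in auto)
  qed (fact G'_approx lower upper)+
  have step: "sym_diff h (Suc n) (G 0) x = sym_diff h n (G' 0) x"
    unfolding sym_diff_Suc G'_def H_def ..
  have sq_Suc: "(\<Sum>i\<in>{1..Suc n}. h i ^ 2) = V + H ^ 2"
    by (simp add: V_def H_def)
  have coeff: "2 * H * (A + B * x + C * (x ^ 2 + (V + H ^ 2) / 3) + D * (x ^ 3 + x * (V + H ^ 2)))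
    = 2 * H * (A + C * H ^ 2 / 3) + 2 * H * (B + D * H ^ 2) * x
        + 2 * H * C * (x ^ 2 + V / 3) + 2 * H * D * (x ^ 3 + x * V)"
    by (simp add: field_simps)
  show ?case
    using IH unfolding step sq_Suc prod_Suc H_def[symmetric] coeff[symmetric]
    by (simp only: mult.assoc)
qed

definition powr_deriv :: "real \<Rightarrow> nat \<Rightarrow> real \<Rightarrow> real" where
  "powr_deriv a k y = (\<Prod>j<k. a - real j) * (1 + y) powr (a - real k)"

lemma powr_deriv_has_derivative:
  assumes "0 < 1 + y"
  shows "(powr_deriv a k has_real_derivative powr_deriv a (Suc k) y) (at y)"
proof -
  have "((\<lambda>y. (1 + y) powr (a - real k)) has_real_derivative
          (a - real k) * (1 + y) powr (a - real k - 1) * 1) (at y)"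
    using DERIV_fun_powr[of "\<lambda>y. 1 + y" 1 y "a - real k"] assms
    by (auto intro!: derivative_eq_intros)
  then have "(powr_deriv a k has_real_derivative
      (\<Prod>j<k. a - real j) * ((a - real k) * (1 + y) powr (a - real k - 1) * 1)) (at y)"
    unfolding powr_deriv_def[abs_def] by (rule DERIV_cmult)
  then show ?thesis
    by (simp add: powr_deriv_def algebra_simps)
qed

lemma sqrt_taylor_error:
  fixes y :: real
  assumes "-1 \<le> y"
  shows "\<bar>(1 + y) powr (1/2) - (1 + y/2 - y^2/8 + y^3/16)\<bar> \<le> y ^ 4"
proof -
  define s where "s = sqrt (1 + y)"
  have s_nonneg: "0 \<le> s" and y_eq: "y = s^2 - 1"
    using assms by (auto simp: s_def)
  have "(1 + y) powr (1/2) = s"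
    using assms by (simp add: s_def powr_half_sqrt)
  moreover have "s - (1 + y/2 - y^2/8 + y^3/16) = - ((s - 1)^4 * ((s^2 + 4 * s + 5) / 16))"
    unfolding y_eq by (simp add: field_simps) algebra
  moreover have "(s^2 + 4 * s + 5) / 16 \<le> (s + 1)^4"
  proof -
    have "(s + 1)^4 = 1 + 4 * s + 6 * s^2 + 4 * s^3 + s^4" by algebra
    moreover have "0 \<le> s^3" "0 \<le> s^4" using s_nonneg by auto
    ultimately show ?thesis using s_nonneg by simp
  qed
  then have "(s - 1)^4 * ((s^2 + 4 * s + 5) / 16) \<le> (s - 1)^4 * (s + 1)^4"
    by (rule mult_left_mono) simp
  moreover have "(s - 1)^4 * (s + 1)^4 = y^4"
    unfolding y_eq by algebra
  moreover have "0 \<le> (s - 1)^4 * ((s^2 + 4 * s + 5) / 16)"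
    using s_nonneg by simp
  ultimately show ?thesis by simp
qed

lemma abs_signed_sum_le:
  fixes h :: "'a \<Rightarrow> real"
  assumes "e \<in> PiE I (\<lambda>_. {-1, 1::real})"
  shows "\<bar>\<Sum>i\<in>I. e i * h i\<bar> \<le> (\<Sum>i\<in>I. \<bar>h i\<bar>)"
proof -
  have "\<bar>\<Sum>i\<in>I. e i * h i\<bar> \<le> (\<Sum>i\<in>I. \<bar>e i * h i\<bar>)"
    by (rule sum_abs)
  also have "\<dots> = (\<Sum>i\<in>I. \<bar>h i\<bar>)"
    using assms by (intro sum.cong) (auto simp: PiE_iff abs_mult)
  finally show ?thesis .
qed

lemma sum_1_6: "(\<Sum>i\<in>{1..6::nat}. f i) = f 1 + f 2 + f 3 + f 4 + f 5 + (f 6 :: real)"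
proof -
  have "{1..6::nat} = {1, 2, 3, 4, 5, 6}" by auto
  then show ?thesis by simp
qed

lemma sum_powers_mono:
  fixes t c :: real
  assumes "0 \<le> t" "t \<le> c"
  shows "(\<Sum>i\<in>{1..6::nat}. t ^ i) \<le> (\<Sum>i\<in>{1..6::nat}. c ^ i)"
  using assms by (intro sum_mono power_mono) auto

(* Part (2): for t + ... + t^6 < 1 only the terms with eps_0 = 1 survive. *)
lemma phi_eq_sym_diff:
  fixes t :: real
  assumes "0 < t" and sigma_less: "(\<Sum>i\<in>{1..6::nat}. t ^ i) < 1"
  shows "phi t = sym_diff (\<lambda>i. t ^ i) 6 (\<lambda>y. (1 + y) powr (13/2)) 0 / (135135 * t ^ 21)"
proof -
  define g where "g s = (max s 0) powr (13/2)" for s :: real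
  have split: "{0..6::nat} = insert 0 {1..6}" by auto
  have "g (1 + (\<Sum>i\<in>{1..6}. e i * t ^ i)) - g (- 1 + (\<Sum>i\<in>{1..6}. e i * t ^ i))
      = (1 + (\<Sum>i\<in>{1..6}. e i * t ^ i)) powr (13/2)"
    if "e \<in> PiE {1..6::nat} (\<lambda>_. {-1, 1})" for e
  proof -
    have "\<bar>\<Sum>i\<in>{1..6}. e i * t ^ i\<bar> \<le> (\<Sum>i\<in>{1..6::nat}. t ^ i)"
      using abs_signed_sum_le[OF that, of "\<lambda>i. t ^ i"] \<open>0 < t\<close> by simp
    then show ?thesis
      using sigma_less by (simp add: g_def)
  qed
  then have "(\<Sum>e\<in>PiE {1..6::nat} (\<lambda>_. {-1, 1::real}). (\<Prod>i\<in>{1..6}. e i) *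
        (g (t ^ 0 + (\<Sum>i\<in>{1..6}. e i * t ^ i)) - g (- (t ^ 0) + (\<Sum>i\<in>{1..6}. e i * t ^ i))))
      = sym_diff (\<lambda>i. t ^ i) 6 (\<lambda>y. (1 + y) powr (13/2)) 0"
    unfolding sym_diff_def by (intro sum.cong) auto
  moreover have "(\<Sum>e\<in>PiE (insert 0 {1..6::nat}) (\<lambda>_. {-1, 1::real}).
        (\<Prod>i\<in>insert 0 {1..6}. e i) * g (\<Sum>i\<in>insert 0 {1..6}. e i * t ^ i))
      = (\<Sum>e\<in>PiE {1..6::nat} (\<lambda>_. {-1, 1::real}). (\<Prod>i\<in>{1..6}. e i) *
        (g (t ^ 0 + (\<Sum>i\<in>{1..6}. e i * t ^ i)) - g (- (t ^ 0) + (\<Sum>i\<in>{1..6}. e i * t ^ i))))"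
    by (rule sum_signs_insert) auto
  ultimately show ?thesis
    unfolding phi_def g_def split by simp
qed

lemma phi_small_t:
  fixes t :: real
  assumes "0 < t" and "t \<le> 1/2"
  shows "phi t = (1 / (135135 * t ^ 21)) *
           (\<Sum>e\<in>PiE {1..6::nat} (\<lambda>_. {-1, 1::real}).
              (\<Prod>i\<in>{1..6}. e i) * (1 + (\<Sum>i\<in>{1..6}. e i * t ^ i)) powr (13/2))"
proof -
  have "(\<Sum>i\<in>{1..6::nat}. t ^ i) \<le> (\<Sum>i\<in>{1..6::nat}. (1/2) ^ i)"
    using assms by (intro sum_powers_mono) auto
  also have "\<dots> < 1"
    unfolding sum_1_6 by (simp add: power_divide)
  finally have "(\<Sum>i\<in>{1..6::nat}. t ^ i) < 1" .
  then show ?thesis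
    using phi_eq_sym_diff \<open>0 < t\<close> by (simp add: sym_diff_def)
qed

lemma sym_diff_main_estimate:
  fixes t :: real
  assumes "0 < t" and sigma_le: "(\<Sum>i\<in>{1..6::nat}. t ^ i) \<le> 1/2"
  shows "\<bar>sym_diff (\<lambda>i. t ^ i) 6 (\<lambda>y. (1 + y) powr (13/2)) 0
            - 135135 * t ^ 21 * (1 - (\<Sum>i\<in>{1..6::nat}. (t ^ i) ^ 2) / 24)\<bar>
         \<le> 135135 * t ^ 21 * (\<Sum>i\<in>{1..6::nat}. t ^ i) ^ 4"
proof -
  define \<sigma> where "\<sigma> = (\<Sum>i\<in>{1..6::nat}. t ^ i)"
  define K :: real where "K = 135135 / 64"
  have approx: "\<bar>sym_diff (\<lambda>i. t ^ i) 6 (powr_deriv (13/2) 0) 0 - (\<Prod>i\<in>{1..6::nat}. 2 * t ^ i) *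
          (K + K / 2 * 0 + (- K / 8) * (0 ^ 2 + (\<Sum>i\<in>{1..6::nat}. (t ^ i) ^ 2) / 3)
             + K / 16 * (0 ^ 3 + 0 * (\<Sum>i\<in>{1..6::nat}. (t ^ i) ^ 2)))\<bar>
        \<le> (\<Prod>i\<in>{1..6::nat}. 2 * t ^ i) * (K * \<sigma> ^ 4)"
  proof (rule sym_diff_cubic_approx[where a = "-\<sigma>" and b = \<sigma>])
    show "(powr_deriv (13/2) k has_real_derivative powr_deriv (13/2) (Suc k) y) (at y)" if "y \<in> {-\<sigma>..\<sigma>}" for k y
      using that sigma_le by (intro powr_deriv_has_derivative) (simp add: \<sigma>_def)
    show "\<bar>powr_deriv (13/2) 6 y - (K + K / 2 * y + - K / 8 * y ^ 2 + K / 16 * y ^ 3)\<bar> \<le> K * \<sigma> ^ 4"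
      if "y \<in> {-\<sigma>..\<sigma>}" for y
    proof -
      have "powr_deriv (13/2) 6 y = K * (1 + y) powr (1/2)"
        by (simp add: powr_deriv_def K_def eval_nat_numeral prod.lessThan_Suc)
      then have diff_eq: "powr_deriv (13/2) 6 y - (K + K / 2 * y + - K / 8 * y ^ 2 + K / 16 * y ^ 3)
          = K * ((1 + y) powr (1/2) - (1 + y/2 - y^2/8 + y^3/16))"
        by (simp add: algebra_simps)
      have "\<bar>powr_deriv (13/2) 6 y - (K + K / 2 * y + - K / 8 * y ^ 2 + K / 16 * y ^ 3)\<bar>
          = K * \<bar>(1 + y) powr (1/2) - (1 + y/2 - y^2/8 + y^3/16)\<bar>"
        unfolding diff_eq abs_mult by (simp add: K_def)
      also have "\<dots> \<le> K * y ^ 4"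
        using sqrt_taylor_error[of y] that sigma_le by (simp add: K_def \<sigma>_def)
      also have "\<dots> \<le> K * \<sigma> ^ 4"
      proof -
        have "y ^ 4 \<le> \<sigma> ^ 4"
          using that by (intro power_mono_even) auto
        then show ?thesis by (simp add: K_def)
      qed
      finally show ?thesis .
    qed
  qed (use \<open>0 < t\<close> in \<open>simp_all add: \<sigma>_def\<close>)
  have prod_steps: "(\<Prod>i\<in>{1..6::nat}. 2 * t ^ i) = 64 * t ^ 21"
    by (simp add: prod.atLeast_Suc_atMost eval_nat_numeral)
  have main_term: "(\<Prod>i\<in>{1..6::nat}. 2 * t ^ i) *
          (K + K / 2 * 0 + (- K / 8) * (0 ^ 2 + (\<Sum>i\<in>{1..6::nat}. (t ^ i) ^ 2) / 3)
             + K / 16 * (0 ^ 3 + 0 * (\<Sum>i\<in>{1..6::nat}. (t ^ i) ^ 2)))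
      = 135135 * t ^ 21 * (1 - (\<Sum>i\<in>{1..6::nat}. (t ^ i) ^ 2) / 24)"
    unfolding prod_steps K_def by (simp add: field_simps)
  have error_term: "(\<Prod>i\<in>{1..6::nat}. 2 * t ^ i) * (K * \<sigma> ^ 4) = 135135 * t ^ 21 * \<sigma> ^ 4"
    unfolding prod_steps K_def by simp
  have powr_deriv_0: "powr_deriv (13/2) 0 = (\<lambda>y. (1 + y) powr (13/2))"
    by (simp add: powr_deriv_def fun_eq_iff)
  from approx[unfolded main_term error_term powr_deriv_0] show ?thesis
    by (simp only: \<sigma>_def)
qed

lemma phi_approx:
  fixes t :: real
  assumes "0 < t" and sigma_le: "(\<Sum>i\<in>{1..6::nat}. t ^ i) \<le> 1/2"
  shows "\<bar>phi t - (1 - (\<Sum>i\<in>{1..6::nat}. (t ^ i) ^ 2) / 24)\<bar> \<le> (\<Sum>i\<in>{1..6::nat}. t ^ i) ^ 4"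
proof -
  define c where "c = 135135 * t ^ 21"
  define X where "X = 1 - (\<Sum>i\<in>{1..6::nat}. (t ^ i) ^ 2) / 24"
  define L where "L = sym_diff (\<lambda>i. t ^ i) 6 (\<lambda>y. (1 + y) powr (13/2)) 0"
  have "0 < c"
    using \<open>0 < t\<close> by (simp add: c_def)
  have "(\<Sum>i\<in>{1..6::nat}. t ^ i) < 1"
    using sigma_le by linarith
  then have "phi t = L / c"
    unfolding L_def c_def by (rule phi_eq_sym_diff[OF \<open>0 < t\<close>])
  moreover have "L / c - X = (L - c * X) / c"
    using \<open>0 < c\<close> by (simp add: field_simps)
  ultimately have "\<bar>phi t - X\<bar> = \<bar>L - c * X\<bar> / c"
    using \<open>0 < c\<close> by (simp add: abs_divide)
  also have "\<dots> \<le> (\<Sum>i\<in>{1..6::nat}. t ^ i) ^ 4"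
    using sym_diff_main_estimate[OF assms] \<open>0 < c\<close>
    unfolding L_def[symmetric] c_def[symmetric] X_def[symmetric]
    by (simp only: pos_divide_le_eq mult.commute)
  finally show ?thesis
    unfolding X_def .
qed

lemma phi_expansion_error:
  "\<forall>\<^sub>F t in at_right (0::real). \<bar>phi t - (1 - t ^ 2 / 24)\<bar> \<le> 1300 * t ^ 4"
proof -
  have "\<forall>\<^sub>F t in at_right (0::real). 0 < t \<and> t \<le> 1/4"
    unfolding eventually_at_right_field by (intro exI[of _ "1/4"]) auto
  then show ?thesis
  proof eventually_elim
    case (elim t)
    then have t: "0 < t" "t \<le> 1" by auto
    have "(\<Sum>i\<in>{1..6::nat}. t ^ i) \<le> (\<Sum>i\<in>{1..6::nat}. (1/4) ^ i)"
      using elim by (intro sum_powers_mono) auto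
    also have "\<dots> \<le> 1/2"
      unfolding sum_1_6 by (simp add: power_divide)
    finally have approx: "\<bar>phi t - (1 - (\<Sum>i\<in>{1..6::nat}. (t ^ i) ^ 2) / 24)\<bar> \<le> (\<Sum>i\<in>{1..6::nat}. t ^ i) ^ 4"
      using phi_approx t by simp
    have "(\<Sum>i\<in>{1..6::nat}. t ^ i) \<le> (\<Sum>i\<in>{1..6::nat}. t)"
      using t by (intro sum_mono power_decreasing[of 1, simplified]) auto
    then have "(\<Sum>i\<in>{1..6::nat}. t ^ i) ^ 4 \<le> (6 * t) ^ 4"
      using t by (intro power_mono sum_nonneg) auto
    then have sigma: "(\<Sum>i\<in>{1..6::nat}. t ^ i) ^ 4 \<le> 1296 * t ^ 4"
      by (simp add: power_mult_distrib)
    have squares: "(\<Sum>i\<in>{1..6::nat}. (t ^ i) ^ 2) = t ^ 2 + (\<Sum>i\<in>{2..6::nat}. (t ^ i) ^ 2)"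
      by (simp add: sum.atLeast_Suc_atMost numeral_2_eq_2)
    have "(\<Sum>i\<in>{2..6::nat}. (t ^ i) ^ 2) \<le> (\<Sum>i\<in>{2..6::nat}. t ^ 4)"
      using t by (intro sum_mono) (auto simp flip: power_mult intro!: power_decreasing)
    then have tail: "(\<Sum>i\<in>{2..6::nat}. (t ^ i) ^ 2) \<le> 5 * t ^ 4"
      by simp
    have "0 \<le> (\<Sum>i\<in>{2..6::nat}. (t ^ i) ^ 2)" and "0 \<le> t ^ 4"
      by (simp_all add: sum_nonneg)
    with approx sigma squares tail show ?case
      unfolding abs_le_iff by linarith
  qed
qed

lemma phi_tendsto_one: "(phi \<longlongrightarrow> 1) (at_right 0)"
proof (rule LIM_zero_cancel, rule Lim_null_comparison)
  show "\<forall>\<^sub>F t in at_right 0. norm (phi t - 1) \<le> 1300 * t ^ 4 + t ^ 2 / 24"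
    using phi_expansion_error
  proof eventually_elim
    case (elim t)
    have "0 \<le> t ^ 2" by simp
    with elim show ?case
      unfolding real_norm_def abs_le_iff by linarith
  qed
  show "((\<lambda>t::real. 1300 * t ^ 4 + t ^ 2 / 24) \<longlongrightarrow> 0) (at_right 0)"
    by (auto intro!: tendsto_eq_intros)
qed

lemma sum_reverse_inverse_powers:
  fixes t :: real and e :: "nat \<Rightarrow> real"
  assumes "t \<noteq> 0"
  shows "(\<Sum>i\<in>{0..n}. e i * (1 / t) ^ i) = (\<Sum>i\<in>{0..n}. e (n - i) * t ^ i) / t ^ n"
proof -
  have "(\<Sum>i\<in>{0..n}. e (n - i) * t ^ i) = (\<Sum>i\<in>{0..n}. e i * t ^ (n - i))"
    by (subst sum.atLeastAtMost_rev) (intro sum.cong, auto)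
  also have "\<dots> = (\<Sum>i\<in>{0..n}. e i * (1 / t) ^ i) * t ^ n"
    unfolding sum_distrib_right
    using assms by (intro sum.cong) (auto simp: power_diff power_one_over)
  finally show ?thesis
    using assms by simp
qed

lemma phi_inversion:
  fixes t :: real
  assumes "0 < t"
  shows "phi (1 / t) = t ^ 3 * phi t"
proof -
  let ?S = "PiE {0..6::nat} (\<lambda>_. {-1, 1::real})"
  define F where "F s e = (\<Prod>i\<in>{0..6::nat}. e i) * (max (\<Sum>i\<in>{0..6}. e i * s ^ i) 0) powr (13/2)"
    for s :: real and e :: "nat \<Rightarrow> real"
  define r where "r e = restrict (\<lambda>i. e (6 - i)) {0..6::nat}" for e :: "nat \<Rightarrow> real"
  have r_in: "r e \<in> ?S" and r_r: "r (r e) = e" if "e \<in> ?S" for e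
    using that by (auto simp: r_def PiE_iff extensional_def fun_eq_iff)
  have F_inverse: "F (1 / t) e = F t (r e) / t ^ 39" for e
  proof -
    have prod_r: "(\<Prod>i\<in>{0..6::nat}. e i) = (\<Prod>i\<in>{0..6::nat}. r e i)"
      by (subst prod.atLeastAtMost_rev) (simp add: r_def)
    have sum_r: "(\<Sum>i\<in>{0..6::nat}. e i * (1 / t) ^ i) = (\<Sum>i\<in>{0..6::nat}. r e i * t ^ i) / t ^ 6"
      using assms by (simp add: sum_reverse_inverse_powers r_def)
    have "max (A / t ^ 6) 0 powr (13/2) = max A 0 powr (13/2) / t ^ 39" for A
    proof -
      have "max (A / t ^ 6) 0 = max A 0 / t ^ 6"
        using assms by (auto simp: max_def divide_le_0_iff)
      moreover have "(t ^ 6) powr (13/2) = t ^ 39"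
      proof -
        have "(t ^ 6) powr (13/2) = (t powr 6) powr (13/2)"
          using assms by simp
        also have "\<dots> = t powr 39"
          by (simp add: powr_powr)
        finally show ?thesis
          using assms by simp
      qed
      ultimately show ?thesis
        using assms by (simp add: powr_divide)
    qed
    then show ?thesis
      unfolding F_def prod_r sum_r by simp
  qed
  define Sum where "Sum = (\<Sum>e\<in>?S. F t e)"
  have "(\<Sum>e\<in>?S. F t (r e)) = Sum"
    unfolding Sum_def
    by (rule sum.reindex_bij_witness[where i = r and j = r]) (auto simp: r_in r_r)
  then have sum_inverse: "(\<Sum>e\<in>?S. F (1 / t) e) = Sum / t ^ 39"
    by (simp only: F_inverse flip: sum_divide_distrib)
  have phi_t: "phi t = Sum / (135135 * t ^ 21)"
    unfolding phi_def F_def[symmetric] Sum_def by simp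
  have "phi (1 / t) = t ^ 21 * Sum / (135135 * t ^ 39)"
    unfolding phi_def F_def[symmetric] sum_inverse by (simp add: power_one_over)
  also have "\<dots> = Sum / (135135 * t ^ 18)"
    using assms by (simp add: power_add[symmetric, of t 21 18] divide_simps)
  also have "\<dots> = t ^ 3 * phi t"
    unfolding phi_t using assms by (simp add: power_add[symmetric, of t 3 18] divide_simps)
  finally show ?thesis .
qed

theorem mainTheorem3:
  shows "(\<forall>t::real. t > 0 \<longrightarrow> phi (1 / t) = t ^ 3 * phi t)
    \<and> (phi \<longlongrightarrow> 1) (at_right 0)
    \<and> (\<forall>t::real. 0 < t \<and> t \<le> 1/2 \<longrightarrow>
         phi t = (1 / (135135 * t ^ 21)) *
           (\<Sum>e\<in>PiE {1..6::nat} (\<lambda>_. {-1, 1::real}).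
              (\<Prod>i\<in>{1..6}. e i) * (1 + (\<Sum>i\<in>{1..6}. e i * t ^ i)) powr (13/2)))
    \<and> (\<lambda>t. phi t - (1 - t ^ 2 / 24)) \<in> O[at_right (0::real)](\<lambda>t. t ^ 4)"
proof (intro conjI allI impI)
  show "phi (1 / t) = t ^ 3 * phi t" if "t > 0" for t :: real
    using phi_inversion[OF that] .
  show "(phi \<longlongrightarrow> 1) (at_right 0)"
    by (rule phi_tendsto_one)
  show "phi t = (1 / (135135 * t ^ 21)) *
           (\<Sum>e\<in>PiE {1..6::nat} (\<lambda>_. {-1, 1::real}).
              (\<Prod>i\<in>{1..6}. e i) * (1 + (\<Sum>i\<in>{1..6}. e i * t ^ i)) powr (13/2))"
    if "0 < t \<and> t \<le> 1/2" for t :: real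
    using phi_small_t that by blast
  show "(\<lambda>t. phi t - (1 - t ^ 2 / 24)) \<in> O[at_right (0::real)](\<lambda>t. t ^ 4)"
    using phi_expansion_error by (intro bigoI[where c = 1300]) (auto elim!: eventually_mono)
qed

end
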